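(* Consider an instance of the Steiner Team Orienteering Problem and the formulation $\mathcal{F}_2$ as described in the context, and let $\mathcal{K}$ be the set of conflicting vertex pairs. For every feasible solution $(x,y,f,\varphi)$ of $\mathcal{F}_2$, every pair $\langle i,j\rangle\in\mathcal{K}$ and every $V\subseteq N\setminus\{t\}$ with $\{i,j\}\subseteq V$, we have $\sum_{e\in\delta^+(V)}x_e\ge y_i+y_j$.
   Context: An instance of the Steiner Team Orienteering Problem (STOP) consists of: a digraph $G=(N,A)$; an origin $s\in N$ and a destination $t\in N$ with $s\neq t$; disjoint sets $S,P\subseteq N\setminus\{s,t\}$ (mandatory and profitable vertices) with $N=S\cup P\cup\{s,t\}$; rewards $p_i\in\mathbb{Z}^+$ for $i\in P$; traverse times $d_{ij}\in\mathbb{R}^+$ for $(i,j)\in A$; a number $m$ of vehicles and a time limit $T$. For $i\in N$ let $\delta^+(i)=\{j\in N:(i,j)\in A\}$ and $\delta^-(i)=\{j\in N:(j,i)\in A\}$; for $V\subseteq N$ let $\delta^+(V)=\{(i,j)\in A: i\in V, j\in N\setminus V\}$ and $\delta^-(V)=\{(i,j)\in A: i\in N\setminus V, j\in V\}$. For $i,j\in N$, $R_{ij}$ denotes the minimum of $\sum_{a\in A_p}d_a$ over all paths $p$ from $i$ to $j$ in $G$ (with arc set $A_p$), and $R_{ii}=0$. $\mathcal{K}$ is the set of pairs $\langle i,j\rangle$ with $i,j\in N\setminus\{s,t\}$ such that every route from $s$ to $t$ in $G$ visiting both $i$ and $j$ (in any order) has total traverse time (sum of $d$ over its arcs) exceeding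 $T$. $\mathcal{F}_2$: maximize $\sum_{i\in P}p_iy_i$ over $x\in\{0,1\}^A$, $y\in\{0,1\}^N$, $f\in\mathbb{R}^A$, $\varphi\in\mathbb{R}$ subject to: $y_i=1$ for all $i\in S\cup\{s,t\}$; $\sum_{j\in\delta^+(i)}x_{ij}=y_i$ for all $i\in S\cup P$; $\sum_{j\in\delta^+(s)}x_{sj}=\sum_{i\in\delta^-(t)}x_{it}=m-\varphi$; $\sum_{i\in\delta^-(s)}x_{is}=\sum_{j\in\delta^+(t)}x_{tj}=0$; $\sum_{j\in\delta^+(i)}x_{ij}-\sum_{j\in\delta^-(i)}x_{ji}=0$ for all $i\in S\cup P$; $f_{sj}=(T-d_{sj})x_{sj}$ for all $j\in\delta^+(s)$; $\sum_{j\in\delta^-(i)}f_{ji}-\sum_{j\in\delta^+(i)}f_{ij}=\sum_{j\in\delta^+(i)}d_{ij}x_{ij}$ for all $i\in S\cup P$; $f_{ij}\le(T-R_{si}-d_{ij})x_{ij}$ for all $(i,j)\in A$ with $i\neq s$; $f_{ij}\ge R_{jt}x_{ij}$ for all $(i,j)\in A$; $f\ge0$; $0\le\varphi\le m$. *)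

theory Defs
  imports Complex_Main "HOL-Library.Extended_Real"
begin

definition out_nbrs :: "('v \<times> 'v) set \<Rightarrow> 'v set \<Rightarrow> 'v \<Rightarrow> 'v set" where
  "out_nbrs A N i = {j \<in> N. (i, j) \<in> A}"

definition in_nbrs :: "('v \<times> 'v) set \<Rightarrow> 'v set \<Rightarrow> 'v \<Rightarrow> 'v set" where
  "in_nbrs A N i = {j \<in> N. (j, i) \<in> A}"

definition out_cut :: "('v \<times> 'v) set \<Rightarrow> 'v set \<Rightarrow> 'v set \<Rightarrow> ('v \<times> 'v) set" where
  "out_cut A N V = {(i, j) \<in> A. i \<in> V \<and> j \<in> N - V}"

definition is_path :: "'v set \<Rightarrow> ('v \<times> 'v) set \<Rightarrow> 'v \<Rightarrow> 'v \<Rightarrow> 'v list \<Rightarrow> bool" where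
  "is_path N A u v p \<longleftrightarrow> p \<noteq> [] \<and> hd p = u \<and> last p = v \<and> set p \<subseteq> N \<and> distinct p
     \<and> (\<forall>k. Suc k < length p \<longrightarrow> (p ! k, p ! Suc k) \<in> A)"

definition path_time :: "('v \<times> 'v \<Rightarrow> real) \<Rightarrow> 'v list \<Rightarrow> real" where
  "path_time d p = sum_list (map d (zip p (tl p)))"

text \<open>R_{ij}: shortest path time from i to j (R_{ii} = 0; +infinity if no path).\<close>
definition R :: "'v set \<Rightarrow> ('v \<times> 'v) set \<Rightarrow> ('v \<times> 'v \<Rightarrow> real) \<Rightarrow> 'v \<Rightarrow> 'v \<Rightarrow> ereal" where
  "R N A d i j = (if i = j then 0 else Inf {ereal (path_time d p) | p. is_path N A i j p})"

definition conflicting ::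
  "'v set \<Rightarrow> ('v \<times> 'v) set \<Rightarrow> 'v \<Rightarrow> 'v \<Rightarrow> ('v \<times> 'v \<Rightarrow> real) \<Rightarrow> real \<Rightarrow> 'v \<Rightarrow> 'v \<Rightarrow> bool" where
  "conflicting N A s t d T i j \<longleftrightarrow>
     i \<in> N - {s, t} \<and> j \<in> N - {s, t} \<and>
     (\<forall>p. is_path N A s t p \<and> i \<in> set p \<and> j \<in> set p \<longrightarrow> path_time d p > T)"

definition stop_instance ::
  "'v set \<Rightarrow> ('v \<times> 'v) set \<Rightarrow> 'v \<Rightarrow> 'v \<Rightarrow> 'v set \<Rightarrow> 'v set \<Rightarrow> ('v \<Rightarrow> int)
    \<Rightarrow> ('v \<times> 'v \<Rightarrow> real) \<Rightarrow> nat \<Rightarrow> real \<Rightarrow> bool" where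
  "stop_instance N A s t S P p d m T \<longleftrightarrow>
     finite N \<and> A \<subseteq> N \<times> N \<and> (\<forall>i. (i, i) \<notin> A) \<and>
     s \<in> N \<and> t \<in> N \<and> s \<noteq> t \<and>
     S \<subseteq> N - {s, t} \<and> P \<subseteq> N - {s, t} \<and> S \<inter> P = {} \<and> N = S \<union> P \<union> {s, t} \<and>
     (\<forall>i\<in>P. p i > 0) \<and> (\<forall>a\<in>A. d a > 0)"

definition F2_feasible ::
  "'v set \<Rightarrow> ('v \<times> 'v) set \<Rightarrow> 'v \<Rightarrow> 'v \<Rightarrow> 'v set \<Rightarrow> 'v set
    \<Rightarrow> ('v \<times> 'v \<Rightarrow> real) \<Rightarrow> nat \<Rightarrow> real
    \<Rightarrow> ('v \<times> 'v \<Rightarrow> real) \<Rightarrow> ('v \<Rightarrow> real) \<Rightarrow> ('v \<times> 'v \<Rightarrow> real) \<Rightarrow> real \<Rightarrow> bool" where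
  "F2_feasible N A s t S P d m T x y f \<phi> \<longleftrightarrow>
     (\<forall>a\<in>A. x a \<in> {0, 1}) \<and> (\<forall>i\<in>N. y i \<in> {0, 1}) \<and>
     (\<forall>i \<in> S \<union> {s, t}. y i = 1) \<and>
     (\<forall>i \<in> S \<union> P. (\<Sum>j\<in>out_nbrs A N i. x (i, j)) = y i) \<and>
     (\<Sum>j\<in>out_nbrs A N s. x (s, j)) = real m - \<phi> \<and>
     (\<Sum>i\<in>in_nbrs A N t. x (i, t)) = real m - \<phi> \<and>
     (\<Sum>i\<in>in_nbrs A N s. x (i, s)) = 0 \<and>
     (\<Sum>j\<in>out_nbrs A N t. x (t, j)) = 0 \<and>
     (\<forall>i \<in> S \<union> P. (\<Sum>j\<in>out_nbrs A N i. x (i, j)) - (\<Sum>j\<in>in_nbrs A N i. x (j, i)) = 0) \<and>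
     (\<forall>j \<in> out_nbrs A N s. f (s, j) = (T - d (s, j)) * x (s, j)) \<and>
     (\<forall>i \<in> S \<union> P. (\<Sum>j\<in>in_nbrs A N i. f (j, i)) - (\<Sum>j\<in>out_nbrs A N i. f (i, j))
                    = (\<Sum>j\<in>out_nbrs A N i. d (i, j) * x (i, j))) \<and>
     (\<forall>(i, j)\<in>A. i \<noteq> s \<longrightarrow>
          ereal (f (i, j)) \<le> (ereal T - R N A d s i - ereal (d (i, j))) * ereal (x (i, j))) \<and>
     (\<forall>(i, j)\<in>A. ereal (f (i, j)) \<ge> R N A d j t * ereal (x (i, j))) \<and>
     (\<forall>a\<in>A. f a \<ge> 0) \<and>
     0 \<le> \<phi> \<and> \<phi> \<le> real m"

end

theory Submission
  imports Defs
begin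

(* The arcs with x = 1 form s-t routes: s has no incoming and t no outgoing selected arc, and
   every other vertex has as many incoming as outgoing selected arcs, at most one.  The flow f is
   the time still available after traversing an arc: it is T - d on arcs out of s and drops by d
   along every selected arc.  Being nonnegative, it rules out selected cycles and bounds the time
   of every selected s-t route by T.  A visited vertex i of V thus lies on a route, which leaves V
   through an arc whose route prefix from s passes through i; that prefix is unique because
   in-degrees are at most one.  If conflicting vertices i and j shared such an arc, they would lie
   on a common route, an elementary s-t path of time at most T.  So each of i, j that is visited
   contributes its own selected arc to the cut. *)

definition walk :: "('v \<times> 'v) set \<Rightarrow> 'v \<Rightarrow> 'v \<Rightarrow> 'v list \<Rightarrow> bool" where
  "walk X u v q \<longleftrightarrow> q \<noteq> [] \<and> hd q = u \<and> last q = v \<and> successively (\<lambda>a b. (a, b) \<in> X) q"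

lemma walk_singleton [simp]: "walk X u v [w] \<longleftrightarrow> u = w \<and> v = w"
  by (auto simp: walk_def)

lemma walk_Cons: "(u, v) \<in> X \<Longrightarrow> walk X v w q \<Longrightarrow> walk X u w (u # q)"
  by (auto simp: walk_def successively_Cons)

lemma walk_Cons_iff:
  "q \<noteq> [] \<Longrightarrow> walk X u w (c # q) \<longleftrightarrow> c = u \<and> (u, hd q) \<in> X \<and> walk X (hd q) w q"
  by (auto simp: walk_def successively_Cons)

lemma walk_snoc: "walk X u v q \<Longrightarrow> (v, w) \<in> X \<Longrightarrow> walk X u w (q @ [w])"
  by (auto simp: walk_def successively_append_iff)

lemma walk_append_iff:
  "p \<noteq> [] \<Longrightarrow> r \<noteq> [] \<Longrightarrow>
    walk X u w (p @ r) \<longleftrightarrow> walk X u (last p) p \<and> (last p, hd r) \<in> X \<and> walk X (hd r) w r"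
  by (auto simp: walk_def successively_append_iff)

lemma walk_append: "walk X u v p \<Longrightarrow> walk X v w q \<Longrightarrow> walk X u w (p @ tl q)"
  by (cases q; cases "tl q") (auto simp: walk_def successively_append_iff successively_Cons)

lemma walk_last_in_set: "walk X u v q \<Longrightarrow> v \<in> set q"
  by (auto simp: walk_def)

lemma walk_set_subset: "walk X u v q \<Longrightarrow> set q \<subseteq> insert u (snd ` X)"
proof (induction q arbitrary: u)
  case (Cons c q)
  then show ?case
    by (cases "q = []") (force simp: walk_Cons_iff)+
qed (simp add: walk_def)

lemma walk_leaves_set:
  assumes "walk X u w q" "u \<in> V" "w \<notin> V"
  shows "\<exists>a b p. walk X u a p \<and> (a, b) \<in> X \<and> a \<in> V \<and> b \<notin> V"
  using assms
proof (induction q arbitrary: u)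
  case (Cons c q)
  have "q \<noteq> []" using Cons.prems by (auto simp: walk_def)
  then have arc: "(u, hd q) \<in> X" and rest: "walk X (hd q) w q"
    using Cons.prems(1) by (simp_all add: walk_Cons_iff)
  show ?case
  proof (cases "hd q \<in> V")
    case True
    then obtain a b p where "walk X (hd q) a p" "(a, b) \<in> X" "a \<in> V" "b \<notin> V"
      using Cons.IH[OF rest] Cons.prems(3) by blast
    with arc show ?thesis by (meson walk_Cons)
  next
    case False
    with arc Cons.prems(2) show ?thesis by (intro exI[of _ u] exI[of _ "hd q"] exI[of _ "[u]"]) simp
  qed
qed (simp add: walk_def)

lemma path_time_snoc: "q \<noteq> [] \<Longrightarrow> path_time d (q @ [v]) = path_time d q + d (last q, v)"
  by (induction q rule: induct_list012) (auto simp: path_time_def)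

lemma finite_measure_induct [consumes 2, case_names less]:
  fixes g :: "'a \<Rightarrow> 'b::linorder"
  assumes "finite X" "a \<in> X"
    and step: "\<And>a. a \<in> X \<Longrightarrow> (\<And>b. b \<in> X \<Longrightarrow> g b < g a \<Longrightarrow> Q b) \<Longrightarrow> Q a"
  shows "Q a"
  using assms(2)
proof (induction a rule: measure_induct_rule[where f = "\<lambda>a. card {b \<in> X. g b < g a}"])
  case (less a)
  show ?case
  proof (rule step[OF less.prems])
    fix b assume "b \<in> X" "g b < g a"
    then have "{c \<in> X. g c < g b} \<subset> {c \<in> X. g c < g a}" by auto
    then have "card {c \<in> X. g c < g b} < card {c \<in> X. g c < g a}"
      using \<open>finite X\<close> by (simp add: psubset_card_mono)
    then show "Q b" using less.IH \<open>b \<in> X\<close> by blast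
  qed
qed

(* X is the set of arcs used by the vehicles, f (u, v) the time left after traversing (u, v). *)
locale timed_routes =
  fixes N :: "'v set" and A X :: "('v \<times> 'v) set" and s t :: 'v
    and d f :: "'v \<times> 'v \<Rightarrow> real" and T :: real
  assumes finite_arcs: "finite X"
    and arcs_subset: "X \<subseteq> A" and A_subset: "A \<subseteq> N \<times> N"
    and source_ne_sink: "s \<noteq> t"
    and no_arc_into_source: "(u, s) \<notin> X"
    and no_arc_out_of_sink: "(t, v) \<notin> X"
    and arc_continues: "(u, v) \<in> X \<Longrightarrow> v \<noteq> t \<Longrightarrow> \<exists>w. (v, w) \<in> X"
    and arc_preceded: "(v, w) \<in> X \<Longrightarrow> v \<noteq> s \<Longrightarrow> \<exists>u. (u, v) \<in> X"
    and predecessor_unique: "(u, v) \<in> X \<Longrightarrow> (u', v) \<in> X \<Longrightarrow> v \<noteq> t \<Longrightarrow> u = u'"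
    and flow_source: "(s, v) \<in> X \<Longrightarrow> f (s, v) = T - d (s, v)"
    and flow_step: "(u, v) \<in> X \<Longrightarrow> (v, w) \<in> X \<Longrightarrow> f (v, w) = f (u, v) - d (v, w)"
    and flow_nonneg: "a \<in> X \<Longrightarrow> 0 \<le> f a"
    and time_pos: "a \<in> X \<Longrightarrow> 0 < d a"
begin

lemma source_walk_exists:
  assumes "(u, v) \<in> X" shows "\<exists>q. walk X s u q"
proof -
  have "\<exists>q. walk X s (fst a) q" if "a \<in> X" for a
    using finite_arcs that
  proof (induction a rule: finite_measure_induct[where g = "\<lambda>a. - f a"])
    case (less a)
    obtain u v where a: "a = (u, v)" by (cases a)
    show ?case
    proof (cases "u = s")
      case True
      then have "walk X s (fst a) [s]" using a by simp
      then show ?thesis ..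
    next
      case False
      then obtain w where wu: "(w, u) \<in> X" using arc_preceded less.hyps a by blast
      have "- f (w, u) < - f a"
        using flow_step[OF wu] time_pos less.hyps a by fastforce
      then obtain q where "walk X s w q" using less.IH[OF wu] by auto
      then have "walk X s (fst a) (q @ [u])" using wu walk_snoc a by fastforce
      then show ?thesis ..
    qed
  qed
  then show ?thesis using assms by fastforce
qed

lemma sink_walk_exists:
  assumes "(u, v) \<in> X" shows "\<exists>r. walk X v t r"
proof -
  have "\<exists>r. walk X (snd a) t r" if "a \<in> X" for a
    using finite_arcs that
  proof (induction a rule: finite_measure_induct[where g = f])
    case (less a)
    obtain u v where a: "a = (u, v)" by (cases a)
    show ?case
    proof (cases "v = t")
      case True
      then have "walk X (snd a) t [t]" using a by simp
      then show ?thesis ..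
    next
      case False
      then obtain w where vw: "(v, w) \<in> X" using arc_continues less.hyps a by blast
      have "f (v, w) < f a"
        using flow_step[OF _ vw] time_pos[OF vw] less.hyps a by fastforce
      then obtain r where "walk X w t r" using less.IH[OF vw] by auto
      then have "walk X (snd a) t (v # r)" using vw walk_Cons a by fastforce
      then show ?thesis ..
    qed
  qed
  then show ?thesis using assms by fastforce
qed

lemma source_walk_time:
  "walk X s u q \<Longrightarrow> (u, v) \<in> X \<Longrightarrow> path_time d (q @ [v]) = T - f (u, v)"
proof (induction q arbitrary: u v rule: rev_induct)
  case (snoc c q)
  show ?case
  proof (cases "q = []")
    case True
    with snoc.prems(1) have "c = s" "u = s" by (auto simp: walk_def)
    with True snoc.prems(2) show ?thesis by (simp add: path_time_def flow_source)
  next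
    case False
    with snoc.prems(1) have "c = u" and arc: "(last q, u) \<in> X" and walk: "walk X s (last q) q"
      by (simp_all add: walk_append_iff)
    have "path_time d ((q @ [c]) @ [v]) = path_time d (q @ [u]) + d (u, v)"
      using path_time_snoc[of "q @ [u]" d v] \<open>c = u\<close> by simp
    also have "\<dots> = T - f (u, v)"
      using snoc.IH[OF walk arc] flow_step[OF arc snoc.prems(2)] by simp
    finally show ?thesis .
  qed
qed (simp add: walk_def)

lemma route_time_le:
  assumes "walk X s t W" shows "path_time d W \<le> T"
proof -
  obtain q c where W: "W = q @ [c]"
    using assms by (metis walk_def rev_exhaust)
  have "q \<noteq> []" using assms source_ne_sink W by (auto simp: walk_def)
  then have "c = t" "(last q, t) \<in> X" "walk X s (last q) q"
    using assms W by (simp_all add: walk_append_iff)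
  then show ?thesis using source_walk_time flow_nonneg W by fastforce
qed

lemma source_walk_unique:
  "walk X s u q \<Longrightarrow> walk X s u q' \<Longrightarrow> u \<noteq> t \<Longrightarrow> q = q'"
proof (induction q arbitrary: u q' rule: rev_induct)
  case (snoc c q)
  obtain q'' c' where q': "q' = q'' @ [c']"
    using snoc.prems(2) by (metis walk_def rev_exhaust)
  show ?case
  proof (cases "q = []")
    case True
    then have "u = s" "c = s" using snoc.prems(1) by (auto simp: walk_def)
    have "q'' = []"
    proof (rule ccontr)
      assume "q'' \<noteq> []"
      then have "(last q'', u) \<in> X" using snoc.prems(2) q' by (auto simp: walk_append_iff)
      with \<open>u = s\<close> no_arc_into_source show False by blast
    qed
    with True snoc.prems(2) q' \<open>c = s\<close> \<open>u = s\<close> show ?thesis by (auto simp: walk_def)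
  next
    case False
    then have arc: "(last q, u) \<in> X" and walk: "walk X s (last q) q" and "c = u"
      using snoc.prems(1) by (simp_all add: walk_append_iff)
    have "q'' \<noteq> []"
      using snoc.prems(2) q' arc no_arc_into_source by (auto simp: walk_def)
    then have arc': "(last q'', u) \<in> X" and walk': "walk X s (last q'') q''" and "c' = u"
      using snoc.prems(2) q' by (simp_all add: walk_append_iff)
    have "last q = last q''" using predecessor_unique[OF arc arc' snoc.prems(3)] .
    moreover have "last q \<noteq> t" using arc no_arc_out_of_sink by blast
    ultimately have "q = q''" using snoc.IH[OF walk] walk' by simp
    with q' \<open>c = u\<close> \<open>c' = u\<close> show ?thesis by simp
  qed
qed (simp add: walk_def)

lemma source_walk_distinct: "walk X s u q \<Longrightarrow> distinct q"
proof (induction q arbitrary: u rule: rev_induct)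
  case (snoc c q)
  show ?case
  proof (cases "q = []")
    case False
    then have walk: "walk X s (last q) q" and "c = u"
      using snoc.prems by (simp_all add: walk_append_iff)
    have "u \<notin> set q"
    proof
      assume "u \<in> set q"
      then obtain q1 q2 where q: "q = q1 @ u # q2" by (meson split_list)
      have "walk X s u ((q1 @ [u]) @ (q2 @ [u]))"
        using snoc.prems q \<open>c = u\<close> by simp
      then have "walk X s u (q1 @ [u])" and "(u, hd (q2 @ [u])) \<in> X"
        using walk_append_iff[of "q1 @ [u]" "q2 @ [u]" X s u] by auto
      then have "q1 @ [u] = q @ [u]"
        using source_walk_unique snoc.prems \<open>c = u\<close> no_arc_out_of_sink by blast
      then show False using q by simp
    qed
    with snoc.IH[OF walk] \<open>c = u\<close> show ?thesis by simp
  qed simp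
qed simp

lemma route_is_path:
  assumes "walk X s t W" shows "is_path N A s t W"
proof -
  obtain W' where W: "W = s # W'"
    using assms by (cases W) (auto simp: walk_def)
  moreover have "W' \<noteq> []" using assms source_ne_sink W by (auto simp: walk_def)
  ultimately have "(s, hd W') \<in> X" using assms by (simp add: walk_Cons_iff)
  then have "insert s (snd ` X) \<subseteq> N" using arcs_subset A_subset by force
  then have "set W \<subseteq> N" using walk_set_subset[OF assms] by blast
  moreover have "distinct W" using source_walk_distinct[OF assms] .
  moreover have "\<forall>k. Suc k < length W \<longrightarrow> (W ! k, W ! Suc k) \<in> A"
    using assms arcs_subset by (auto simp: walk_def successively_conv_nth)
  ultimately show ?thesis using assms by (auto simp: is_path_def walk_def)
qed

lemma source_walk_extends_to_route:
  assumes "walk X s u q" "(u, v) \<in> X" shows "\<exists>W. walk X s t W \<and> set q \<subseteq> set W"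
proof -
  obtain r where "walk X v t r" using sink_walk_exists[OF assms(2)] by blast
  then have "walk X s t (q @ tl (u # r))" using walk_append[OF assms(1) walk_Cons[OF assms(2)]] by blast
  then show ?thesis by (intro exI[of _ "q @ r"]) simp
qed

definition downstream_arcs :: "'v \<Rightarrow> ('v \<times> 'v) set" where
  "downstream_arcs i = {(u, v) \<in> X. \<exists>q. walk X s u q \<and> i \<in> set q}"

lemma downstream_arcs_subset: "downstream_arcs i \<subseteq> X"
  by (auto simp: downstream_arcs_def)

lemma downstream_arcs_leave:
  assumes "(i, w) \<in> X" "i \<in> V" "t \<notin> V"
  shows "\<exists>u v. (u, v) \<in> downstream_arcs i \<and> u \<in> V \<and> v \<notin> V"
proof -
  obtain q where q: "walk X s i q" using source_walk_exists[OF assms(1)] by blast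
  obtain r where "walk X w t r" using sink_walk_exists[OF assms(1)] by blast
  then have "walk X i t (i # r)" by (rule walk_Cons[OF assms(1)])
  from walk_leaves_set[OF this assms(2,3)] obtain u v p
    where p: "walk X i u p" and uv: "(u, v) \<in> X" "u \<in> V" "v \<notin> V"
    by blast
  have "walk X s u (q @ tl p)" using walk_append[OF q p] .
  moreover have "i \<in> set (q @ tl p)" using walk_last_in_set[OF q] by simp
  ultimately show ?thesis using uv unfolding downstream_arcs_def by blast
qed

lemma downstream_arcs_disjoint:
  assumes "conflicting N A s t d T i j"
  shows "downstream_arcs i \<inter> downstream_arcs j = {}"
proof (rule ccontr)
  assume "downstream_arcs i \<inter> downstream_arcs j \<noteq> {}"
  then obtain u v q q' where uv: "(u, v) \<in> X" and q: "walk X s u q" "i \<in> set q"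
    and q': "walk X s u q'" "j \<in> set q'"
    unfolding downstream_arcs_def by blast
  have "u \<noteq> t" using uv no_arc_out_of_sink by blast
  then have "q' = q" using source_walk_unique[OF q'(1) q(1)] by blast
  then obtain W where W: "walk X s t W" "i \<in> set W" "j \<in> set W"
    using source_walk_extends_to_route[OF q(1) uv] q q' by blast
  then show False
    using assms route_is_path[OF W(1)] route_time_le[OF W(1)] by (auto simp: conflicting_def)
qed

end

locale F2_solution =
  fixes N :: "'v set" and A :: "('v \<times> 'v) set" and s t :: 'v and S P :: "'v set"
    and p :: "'v \<Rightarrow> int" and d :: "'v \<times> 'v \<Rightarrow> real" and m :: nat and T :: real
    and x :: "'v \<times> 'v \<Rightarrow> real" and y :: "'v \<Rightarrow> real" and f :: "'v \<times> 'v \<Rightarrow> real" and \<phi> :: real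
  assumes is_instance: "stop_instance N A s t S P p d m T"
    and is_feasible: "F2_feasible N A s t S P d m T x y f \<phi>"
begin

definition selected :: "('v \<times> 'v) set" where
  "selected = {a \<in> A. x a = 1}"

lemma finite_vertices: "finite N" and graph_arcs: "A \<subseteq> N \<times> N"
  using is_instance unfolding stop_instance_def by blast+

lemma graph_finite: "finite A"
  using finite_subset[OF graph_arcs] finite_vertices by blast

lemma inner_vertices: "S \<union> P = N - {s, t}"
proof -
  have "S \<subseteq> N - {s, t}" "P \<subseteq> N - {s, t}" "N = S \<union> P \<union> {s, t}"
    using is_instance unfolding stop_instance_def by blast+
  then show ?thesis by blast
qed

lemma x_of_bool: "a \<in> A \<Longrightarrow> x a = of_bool (a \<in> selected)"
proof -
  assume "a \<in> A"
  moreover have "\<forall>a\<in>A. x a \<in> {0, 1}" using is_feasible unfolding F2_feasible_def by blast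
  ultimately show ?thesis by (auto simp: selected_def)
qed

lemma finite_selected_nbrs: "finite {w. (v, w) \<in> selected}" "finite {u. (u, v) \<in> selected}"
proof -
  have "finite selected" using graph_finite by (simp add: selected_def)
  then have "finite (snd ` selected)" "finite (fst ` selected)" by simp_all
  moreover have "{w. (v, w) \<in> selected} \<subseteq> snd ` selected" "{u. (u, v) \<in> selected} \<subseteq> fst ` selected"
    by force+
  ultimately show "finite {w. (v, w) \<in> selected}" "finite {u. (u, v) \<in> selected}"
    using finite_subset by blast+
qed

lemma out_degree: "(\<Sum>w\<in>out_nbrs A N v. x (v, w)) = card {w. (v, w) \<in> selected}"
proof -
  have "(\<Sum>w\<in>out_nbrs A N v. x (v, w)) = (\<Sum>w\<in>out_nbrs A N v. of_bool ((v, w) \<in> selected))"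
    by (rule sum.cong) (auto simp: out_nbrs_def x_of_bool)
  also have "\<dots> = card (out_nbrs A N v \<inter> {w. (v, w) \<in> selected})"
    using finite_vertices by (simp add: out_nbrs_def)
  also have "out_nbrs A N v \<inter> {w. (v, w) \<in> selected} = {w. (v, w) \<in> selected}"
    using graph_arcs by (auto simp: out_nbrs_def selected_def)
  finally show ?thesis .
qed

lemma in_degree: "(\<Sum>u\<in>in_nbrs A N v. x (u, v)) = card {u. (u, v) \<in> selected}"
proof -
  have "(\<Sum>u\<in>in_nbrs A N v. x (u, v)) = (\<Sum>u\<in>in_nbrs A N v. of_bool ((u, v) \<in> selected))"
    by (rule sum.cong) (auto simp: in_nbrs_def x_of_bool)
  also have "\<dots> = card (in_nbrs A N v \<inter> {u. (u, v) \<in> selected})"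
    using finite_vertices by (simp add: in_nbrs_def)
  also have "in_nbrs A N v \<inter> {u. (u, v) \<in> selected} = {u. (u, v) \<in> selected}"
    using graph_arcs by (auto simp: in_nbrs_def selected_def)
  finally show ?thesis .
qed

lemma y_binary: "v \<in> N \<Longrightarrow> y v \<in> {0, 1}"
  using is_feasible unfolding F2_feasible_def by blast

lemma inner_out_degree: "v \<in> N - {s, t} \<Longrightarrow> real (card {w. (v, w) \<in> selected}) = y v"
  using is_feasible out_degree unfolding F2_feasible_def inner_vertices by metis

lemma inner_degree_balance:
  "v \<in> N - {s, t} \<Longrightarrow> card {u. (u, v) \<in> selected} = card {w. (v, w) \<in> selected}"
proof -
  assume "v \<in> N - {s, t}"
  then have "(\<Sum>w\<in>out_nbrs A N v. x (v, w)) - (\<Sum>u\<in>in_nbrs A N v. x (u, v)) = 0"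
    using is_feasible unfolding F2_feasible_def inner_vertices by blast
  then show ?thesis by (simp add: out_degree in_degree)
qed

lemma inner_degree_le_1: "v \<in> N - {s, t} \<Longrightarrow> card {w. (v, w) \<in> selected} \<le> 1"
  using inner_out_degree y_binary by fastforce

lemma no_selected_into_source: "(u, s) \<notin> selected"
proof -
  have "(\<Sum>u\<in>in_nbrs A N s. x (u, s)) = 0" using is_feasible unfolding F2_feasible_def by blast
  then have "{u. (u, s) \<in> selected} = {}" using finite_selected_nbrs by (simp add: in_degree)
  then show ?thesis by blast
qed

lemma no_selected_out_of_sink: "(t, v) \<notin> selected"
proof -
  have "(\<Sum>v\<in>out_nbrs A N t. x (t, v)) = 0" using is_feasible unfolding F2_feasible_def by blast
  then have "{v. (t, v) \<in> selected} = {}" using finite_selected_nbrs by (simp add: out_degree)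
  then show ?thesis by blast
qed

lemma selected_arc_vertices: "(u, v) \<in> selected \<Longrightarrow> u \<in> N \<and> v \<in> N"
  using graph_arcs by (auto simp: selected_def)

lemma selected_pred_singleton:
  assumes "(u, v) \<in> selected" "v \<noteq> t" shows "{u'. (u', v) \<in> selected} = {u}"
proof -
  have "v \<in> N - {s, t}"
    using assms selected_arc_vertices no_selected_into_source by blast
  then have "card {u'. (u', v) \<in> selected} \<le> Suc 0"
    using inner_degree_balance inner_degree_le_1 by simp
  then show ?thesis using assms(1) finite_selected_nbrs card_le_Suc0_iff_eq by blast
qed

lemma selected_succ_singleton:
  assumes "(v, w) \<in> selected" "v \<noteq> s" shows "{w'. (v, w') \<in> selected} = {w}"
proof -
  have "v \<in> N - {s, t}"
    using assms selected_arc_vertices no_selected_out_of_sink by blast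
  then have "card {w'. (v, w') \<in> selected} \<le> Suc 0"
    using inner_degree_le_1 by simp
  then show ?thesis using assms(1) finite_selected_nbrs card_le_Suc0_iff_eq by blast
qed

lemma flow_unselected:
  assumes "a \<in> A" "a \<notin> selected" shows "f a = 0"
proof (cases a)
  case (Pair u v)
  have x0: "x (u, v) = 0" using x_of_bool assms Pair by simp
  have "f (u, v) \<ge> 0" using is_feasible assms(1) Pair unfolding F2_feasible_def by blast
  moreover have "f (u, v) \<le> 0"
  proof (cases "u = s")
    case True
    then have "v \<in> out_nbrs A N s" using assms(1) Pair graph_arcs by (auto simp: out_nbrs_def)
    then have "f (s, v) = (T - d (s, v)) * x (s, v)"
      using is_feasible unfolding F2_feasible_def by blast
    then show ?thesis using True x0 by simp
  next
    case False
    then have "ereal (f (u, v)) \<le> (ereal T - R N A d s u - ereal (d (u, v))) * ereal (x (u, v))"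
      using is_feasible assms(1) Pair unfolding F2_feasible_def by blast
    then show ?thesis using x0 by (simp add: zero_ereal_def[symmetric])
  qed
  ultimately show ?thesis using Pair by simp
qed

lemma sum_in_nbrs_selected:
  assumes "\<And>a. a \<in> A \<Longrightarrow> a \<notin> selected \<Longrightarrow> g a = 0"
  shows "(\<Sum>u\<in>in_nbrs A N v. g (u, v)) = (\<Sum>u | (u, v) \<in> selected. g (u, v))"
  by (rule sum.mono_neutral_right)
    (use finite_vertices selected_arc_vertices assms in \<open>auto simp: in_nbrs_def selected_def\<close>)

lemma sum_out_nbrs_selected:
  assumes "\<And>a. a \<in> A \<Longrightarrow> a \<notin> selected \<Longrightarrow> g a = 0"
  shows "(\<Sum>w\<in>out_nbrs A N v. g (v, w)) = (\<Sum>w | (v, w) \<in> selected. g (v, w))"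
  by (rule sum.mono_neutral_right)
    (use finite_vertices selected_arc_vertices assms in \<open>auto simp: out_nbrs_def selected_def\<close>)

lemma selected_flow_step:
  assumes uv: "(u, v) \<in> selected" and vw: "(v, w) \<in> selected"
  shows "f (v, w) = f (u, v) - d (v, w)"
proof -
  have "v \<noteq> s" "v \<noteq> t" using uv vw no_selected_into_source no_selected_out_of_sink by blast+
  then have "v \<in> S \<union> P" using uv selected_arc_vertices inner_vertices by blast
  then have "(\<Sum>u\<in>in_nbrs A N v. f (u, v)) - (\<Sum>w\<in>out_nbrs A N v. f (v, w))
      = (\<Sum>w\<in>out_nbrs A N v. d (v, w) * x (v, w))"
    using is_feasible unfolding F2_feasible_def by blast
  moreover have "(\<Sum>u\<in>in_nbrs A N v. f (u, v)) = (\<Sum>u | (u, v) \<in> selected. f (u, v))"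
    by (rule sum_in_nbrs_selected) (rule flow_unselected)
  moreover have "(\<Sum>w\<in>out_nbrs A N v. f (v, w)) = (\<Sum>w | (v, w) \<in> selected. f (v, w))"
    by (rule sum_out_nbrs_selected) (rule flow_unselected)
  moreover have "(\<Sum>w\<in>out_nbrs A N v. d (v, w) * x (v, w))
      = (\<Sum>w | (v, w) \<in> selected. d (v, w) * x (v, w))"
    by (rule sum_out_nbrs_selected[of "\<lambda>a. d a * x a"]) (simp add: x_of_bool)
  moreover have "x (v, w) = 1" using vw by (simp add: selected_def)
  ultimately show ?thesis
    using selected_pred_singleton[OF uv \<open>v \<noteq> t\<close>] selected_succ_singleton[OF vw \<open>v \<noteq> s\<close>]
    by simp
qed

sublocale timed_routes N A selected s t d f T
proof
  show "finite selected" using graph_finite by (simp add: selected_def)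
  show "selected \<subseteq> A" by (auto simp: selected_def)
  show "A \<subseteq> N \<times> N" by (rule graph_arcs)
  show "s \<noteq> t" using is_instance unfolding stop_instance_def by blast
  show "(u, s) \<notin> selected" for u by (rule no_selected_into_source)
  show "(t, v) \<notin> selected" for v by (rule no_selected_out_of_sink)
  show "\<exists>w. (v, w) \<in> selected" if "(u, v) \<in> selected" "v \<noteq> t" for u v
  proof -
    have "v \<in> N - {s, t}" using that selected_arc_vertices no_selected_into_source by blast
    moreover have "card {u. (u, v) \<in> selected} \<noteq> 0" using that finite_selected_nbrs by auto
    ultimately have "card {w. (v, w) \<in> selected} \<noteq> 0" using inner_degree_balance by simp
    then have "{w. (v, w) \<in> selected} \<noteq> {}" by (rule contrapos_nn) simp
    then show ?thesis by blast
  qed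
  show "\<exists>u. (u, v) \<in> selected" if "(v, w) \<in> selected" "v \<noteq> s" for v w
  proof -
    have "v \<in> N - {s, t}" using that selected_arc_vertices no_selected_out_of_sink by blast
    moreover have "card {w. (v, w) \<in> selected} \<noteq> 0" using that finite_selected_nbrs by auto
    ultimately have "card {u. (u, v) \<in> selected} \<noteq> 0" using inner_degree_balance by simp
    then have "{u. (u, v) \<in> selected} \<noteq> {}" by (rule contrapos_nn) simp
    then show ?thesis by blast
  qed
  show "u = u'" if "(u, v) \<in> selected" "(u', v) \<in> selected" "v \<noteq> t" for u u' v
    using selected_pred_singleton[OF that(1,3)] that(2) by (metis mem_Collect_eq singletonD)
  show "f (s, v) = T - d (s, v)" if "(s, v) \<in> selected" for v
  proof -
    have "v \<in> out_nbrs A N s" using that selected_arc_vertices by (simp add: out_nbrs_def selected_def)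
    then have "f (s, v) = (T - d (s, v)) * x (s, v)"
      using is_feasible unfolding F2_feasible_def by blast
    then show ?thesis using that by (simp add: selected_def)
  qed
  show "f (v, w) = f (u, v) - d (v, w)" if "(u, v) \<in> selected" "(v, w) \<in> selected" for u v w
    using selected_flow_step that .
  show "0 \<le> f a" if "a \<in> selected" for a
  proof -
    have "\<forall>a\<in>A. 0 \<le> f a" using is_feasible unfolding F2_feasible_def by blast
    then show ?thesis using that by (simp add: selected_def)
  qed
  show "0 < d a" if "a \<in> selected" for a
  proof -
    have "\<forall>a\<in>A. 0 < d a" using is_instance unfolding stop_instance_def by blast
    then show ?thesis using that by (simp add: selected_def)
  qed
qed

lemma visited_vertex_has_selected_arc: "v \<in> N - {s, t} \<Longrightarrow> y v = 1 \<Longrightarrow> \<exists>w. (v, w) \<in> selected"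
  using inner_out_degree by fastforce

lemma finite_out_cut: "finite (out_cut A N V)"
  by (rule rev_finite_subset[OF graph_finite]) (auto simp: out_cut_def)

lemma cut_value_eq_card: "(\<Sum>e\<in>out_cut A N V. x e) = card (out_cut A N V \<inter> selected)"
proof -
  have "(\<Sum>e\<in>out_cut A N V. x e) = (\<Sum>e\<in>out_cut A N V. of_bool (e \<in> selected))"
    by (rule sum.cong) (auto simp: out_cut_def x_of_bool)
  also have "\<dots> = card (out_cut A N V \<inter> {e. e \<in> selected})"
    using finite_out_cut by simp
  finally show ?thesis by simp
qed

lemma visited_vertex_cut_bound:
  assumes "k \<in> N - {s, t}" "k \<in> V" "t \<notin> V"
  shows "y k \<le> card (out_cut A N V \<inter> downstream_arcs k)"
proof (cases "y k = 1")
  case True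
  then obtain w where "(k, w) \<in> selected" using visited_vertex_has_selected_arc assms(1) by blast
  then obtain u v where uv: "(u, v) \<in> downstream_arcs k" "u \<in> V" "v \<notin> V"
    using downstream_arcs_leave assms(2,3) by blast
  then have "(u, v) \<in> out_cut A N V \<inter> downstream_arcs k"
    using downstream_arcs_subset selected_arc_vertices by (auto simp: out_cut_def selected_def)
  then have "card (out_cut A N V \<inter> downstream_arcs k) \<noteq> 0"
    using finite_out_cut by auto
  then show ?thesis using True by simp
next
  case False
  then show ?thesis using y_binary[of k] assms(1) by auto
qed

end

theorem corollary2:
  fixes N :: "'v set" and A :: "('v \<times> 'v) set" and s t :: 'v and S P :: "'v set"
    and p :: "'v \<Rightarrow> int" and d :: "'v \<times> 'v \<Rightarrow> real" and m :: nat and T :: real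
    and x :: "'v \<times> 'v \<Rightarrow> real" and y :: "'v \<Rightarrow> real" and f :: "'v \<times> 'v \<Rightarrow> real" and \<phi> :: real
    and i j :: 'v and V :: "'v set"
  assumes "stop_instance N A s t S P p d m T"
    and "F2_feasible N A s t S P d m T x y f \<phi>"
    and "conflicting N A s t d T i j"
    and "V \<subseteq> N - {t}" and "{i, j} \<subseteq> V"
  shows "(\<Sum>e\<in>out_cut A N V. x e) \<ge> y i + y j"
proof -
  interpret F2_solution N A s t S P p d m T x y f \<phi>
    using assms(1,2) by unfold_locales
  let ?C = "out_cut A N V"
  have "i \<in> N - {s, t}" "j \<in> N - {s, t}" using assms(3) by (auto simp: conflicting_def)
  moreover have "t \<notin> V" "i \<in> V" "j \<in> V" using assms(4,5) by auto
  ultimately have "y i + y j \<le> card (?C \<inter> downstream_arcs i) + card (?C \<inter> downstream_arcs j)"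
    using visited_vertex_cut_bound by (simp add: add_mono)
  also have "\<dots> = card (?C \<inter> downstream_arcs i \<union> ?C \<inter> downstream_arcs j)"
  proof -
    have "?C \<inter> downstream_arcs i \<inter> (?C \<inter> downstream_arcs j) = {}"
      using downstream_arcs_disjoint[OF assms(3)] by blast
    then show ?thesis using finite_out_cut by (simp add: card_Un_disjoint)
  qed
  also have "\<dots> \<le> card (?C \<inter> selected)"
    unfolding of_nat_le_iff using downstream_arcs_subset finite_out_cut by (intro card_mono) auto
  also have "\<dots> = (\<Sum>e\<in>?C. x e)"
    by (simp add: cut_value_eq_card)
  finally show ?thesis by simp
qed

end
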